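(* Let $\mathcal M=(M,<,+,0,\ldots)$ be a definably complete locally o-minimal expansion of an ordered group. Let $(G,d_G)$ be a definably compact definable metric group and $(X,d_X)$ a definable metric space, with $G$ acting on $X$ by a definable continuous left action. Then for every $G$-invariant definable closed subset $A$ of $X$ there is a definable continuous $G$-invariant function $f:X\to M$ with $f^{-1}(0)=A$.
   Context: "Definable" means definable in $\mathcal M$ with parameters. $\mathcal M$ is an expansion of an ordered group with dense order without endpoints; locally o-minimal: for every definable $Y\subseteq M$ and $a\in M$ there is an open interval $I\ni a$ with $Y\cap I$ a finite union of points and open intervals; definably complete: every definable subset of $M$ has sup and inf in $M\cup\{\pm\infty\}$. A definable metric space $(X,d_X)$ is a definable set with a definable $d_X:X\times X\to\{a\ge0\}$ satisfying $d_X(x,y)=0\iff x=y$, symmetry and triangle inequality, topologized by the open balls. A definable metric group is a definable metric space whose underlying set is a definable group with multiplication and inversion continuous. It is definably compact if every definable filtered family (any two members contain a common member) of nonempty closed subsets has nonempty intersection. $f$ is $G$-invariant if $f(gx)=f(x)$ for all $g\in G$, $x\in X$. *)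

theory Defs
  imports Main
begin

text \<open>
  Definable sets of an expansion of (M,<,+,0) with parameters are encoded, following
  van den Dries, as a "structure on M": a family D n of subsets of M^n, where
  M^n is represented by the lists of length n over the carrier type 'm.
\<close>

definition is_structure :: "(nat \<Rightarrow> 'm list set set) \<Rightarrow> bool" where
  "is_structure D \<longleftrightarrow>
     (\<forall>n. \<forall>A\<in>D n. A \<subseteq> {xs. length xs = n}) \<and>
     (\<forall>n. {xs. length xs = n} \<in> D n) \<and>
     (\<forall>n. \<forall>A\<in>D n. \<forall>B\<in>D n. A \<union> B \<in> D n) \<and>
     (\<forall>n. \<forall>A\<in>D n. {xs. length xs = n} - A \<in> D n) \<and>
     (\<forall>n. \<forall>A\<in>D n. {xs @ [y] | xs y. xs \<in> A} \<in> D (Suc n)) \<and>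
     (\<forall>n. \<forall>A\<in>D n. {y # xs | y xs. xs \<in> A} \<in> D (Suc n)) \<and>
     (\<forall>n i j. i < n \<longrightarrow> j < n \<longrightarrow> {xs. length xs = n \<and> xs ! i = xs ! j} \<in> D n) \<and>
     (\<forall>n. \<forall>A\<in>D (Suc n). butlast ` A \<in> D n)"

text \<open>The structure expands (M,<,+) and allows parameters (all singletons definable).\<close>
definition expands_ordered_group :: "(nat \<Rightarrow> ('m::{linorder,group_add}) list set set) \<Rightarrow> bool" where
  "expands_ordered_group D \<longleftrightarrow>
     {[x, y] | x y. x < y} \<in> D 2 \<and>
     {[x, y, z] | x y z. z = x + y} \<in> D 3 \<and>
     (\<forall>a. {[a]} \<in> D 1)"

definition definable_subset_M :: "(nat \<Rightarrow> 'm list set set) \<Rightarrow> 'm set \<Rightarrow> bool" where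
  "definable_subset_M D Y \<longleftrightarrow> (\<lambda>y. [y]) ` Y \<in> D 1"

definition locally_o_minimal :: "(nat \<Rightarrow> ('m::linorder) list set set) \<Rightarrow> bool" where
  "locally_o_minimal D \<longleftrightarrow>
     (\<forall>Y. definable_subset_M D Y \<longrightarrow>
        (\<forall>a. \<exists>b c. b < a \<and> a < c \<and>
           (\<exists>P I. finite P \<and> finite I \<and>
              Y \<inter> {b<..<c} = P \<union> (\<Union>(l, u)\<in>I. {l<..<u}))))"

definition definably_complete :: "(nat \<Rightarrow> ('m::linorder) list set set) \<Rightarrow> bool" where
  "definably_complete D \<longleftrightarrow>
     (\<forall>Y. definable_subset_M D Y \<longrightarrow> Y \<noteq> {} \<longrightarrow>
        (bdd_above Y \<longrightarrow> (\<exists>s. (\<forall>y\<in>Y. y \<le> s) \<and> (\<forall>s'. (\<forall>y\<in>Y. y \<le> s') \<longrightarrow> s \<le> s'))) \<and>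
        (bdd_below Y \<longrightarrow> (\<exists>s. (\<forall>y\<in>Y. s \<le> y) \<and> (\<forall>s'. (\<forall>y\<in>Y. s' \<le> y) \<longrightarrow> s' \<le> s))))"

definition def_metric_space ::
  "(nat \<Rightarrow> ('m::{linorder,group_add}) list set set) \<Rightarrow> nat \<Rightarrow> 'm list set \<Rightarrow> ('m list \<Rightarrow> 'm list \<Rightarrow> 'm) \<Rightarrow> bool" where
  "def_metric_space D n X d \<longleftrightarrow>
     X \<in> D n \<and>
     {xs @ ys @ [d xs ys] | xs ys. xs \<in> X \<and> ys \<in> X} \<in> D (2 * n + 1) \<and>
     (\<forall>x\<in>X. \<forall>y\<in>X. 0 \<le> d x y \<and> (d x y = 0 \<longleftrightarrow> x = y) \<and> d x y = d y x) \<and>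
     (\<forall>x\<in>X. \<forall>y\<in>X. \<forall>z\<in>X. d x z \<le> d x y + d y z)"

definition mcont ::
  "'a set \<Rightarrow> ('a \<Rightarrow> 'a \<Rightarrow> 'm::{linorder,zero}) \<Rightarrow> ('b \<Rightarrow> 'b \<Rightarrow> 'm) \<Rightarrow> ('a \<Rightarrow> 'b) \<Rightarrow> bool" where
  "mcont X dX dY f \<longleftrightarrow>
     (\<forall>x\<in>X. \<forall>e>0. \<exists>\<delta>>0. \<forall>y\<in>X. dX x y < \<delta> \<longrightarrow> dY (f x) (f y) < e)"

definition mcont2 ::
  "'a set \<Rightarrow> ('a \<Rightarrow> 'a \<Rightarrow> 'm::{linorder,zero}) \<Rightarrow> 'b set \<Rightarrow> ('b \<Rightarrow> 'b \<Rightarrow> 'm)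
     \<Rightarrow> ('c \<Rightarrow> 'c \<Rightarrow> 'm) \<Rightarrow> ('a \<Rightarrow> 'b \<Rightarrow> 'c) \<Rightarrow> bool" where
  "mcont2 X dX Y dY dZ f \<longleftrightarrow>
     (\<forall>x\<in>X. \<forall>y\<in>Y. \<forall>e>0. \<exists>\<delta>>0. \<forall>x'\<in>X. \<forall>y'\<in>Y.
        dX x x' < \<delta> \<longrightarrow> dY y y' < \<delta> \<longrightarrow> dZ (f x y) (f x' y') < e)"

definition cont_to_M :: "'a set \<Rightarrow> ('a \<Rightarrow> 'a \<Rightarrow> 'm::{linorder,zero}) \<Rightarrow> ('a \<Rightarrow> 'm) \<Rightarrow> bool" where
  "cont_to_M X dX f \<longleftrightarrow>
     (\<forall>x\<in>X. \<forall>a b. a < f x \<and> f x < b \<longrightarrow>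
        (\<exists>\<delta>>0. \<forall>y\<in>X. dX x y < \<delta> \<longrightarrow> a < f y \<and> f y < b))"

definition closed_in_metric :: "'a set \<Rightarrow> ('a \<Rightarrow> 'a \<Rightarrow> 'm::{linorder,zero}) \<Rightarrow> 'a set \<Rightarrow> bool" where
  "closed_in_metric X d A \<longleftrightarrow>
     A \<subseteq> X \<and> (\<forall>x\<in>X - A. \<exists>r>0. \<forall>y\<in>X. d x y < r \<longrightarrow> y \<notin> A)"

definition def_metric_group ::
  "(nat \<Rightarrow> ('m::{linorder,group_add}) list set set) \<Rightarrow> nat \<Rightarrow> 'm list set \<Rightarrow> ('m list \<Rightarrow> 'm list \<Rightarrow> 'm)
     \<Rightarrow> ('m list \<Rightarrow> 'm list \<Rightarrow> 'm list) \<Rightarrow> ('m list \<Rightarrow> 'm list) \<Rightarrow> 'm list \<Rightarrow> bool" where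
  "def_metric_group D m G dG mul ginv e \<longleftrightarrow>
     def_metric_space D m G dG \<and>
     e \<in> G \<and> (\<forall>g\<in>G. \<forall>h\<in>G. mul g h \<in> G) \<and> (\<forall>g\<in>G. ginv g \<in> G) \<and>
     (\<forall>g\<in>G. \<forall>h\<in>G. \<forall>k\<in>G. mul (mul g h) k = mul g (mul h k)) \<and>
     (\<forall>g\<in>G. mul e g = g \<and> mul g e = g) \<and>
     (\<forall>g\<in>G. mul (ginv g) g = e \<and> mul g (ginv g) = e) \<and>
     {g @ h @ mul g h | g h. g \<in> G \<and> h \<in> G} \<in> D (3 * m) \<and>
     {g @ ginv g | g. g \<in> G} \<in> D (2 * m) \<and>
     mcont2 G dG G dG dG mul \<and> mcont G dG dG ginv"

text \<open>A definable family of subsets of G \<subseteq> M^m is given by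
  some S \<in> D (k + m); its members are the nonempty fibres {x. t @ x \<in> S}.\<close>
definition definably_compact ::
  "(nat \<Rightarrow> 'm list set set) \<Rightarrow> nat \<Rightarrow> 'm list set \<Rightarrow> ('m list \<Rightarrow> 'm list \<Rightarrow> 'm::{linorder,zero}) \<Rightarrow> bool" where
  "definably_compact D m G dG \<longleftrightarrow>
     (\<forall>k S. S \<in> D (k + m) \<longrightarrow>
        (let Fam = (\<lambda>t. {x. t @ x \<in> S}) ` {t. length t = k \<and> (\<exists>x. t @ x \<in> S)} in
          (\<forall>F\<in>Fam. F \<noteq> {} \<and> closed_in_metric G dG F) \<longrightarrow>
          (\<forall>F1\<in>Fam. \<forall>F2\<in>Fam. \<exists>F3\<in>Fam. F3 \<subseteq> F1 \<inter> F2) \<longrightarrow>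
          (\<exists>x\<in>G. \<forall>F\<in>Fam. x \<in> F)))"

definition def_action ::
  "(nat \<Rightarrow> ('m::{linorder,group_add}) list set set) \<Rightarrow> nat \<Rightarrow> 'm list set \<Rightarrow> ('m list \<Rightarrow> 'm list \<Rightarrow> 'm)
     \<Rightarrow> ('m list \<Rightarrow> 'm list \<Rightarrow> 'm list) \<Rightarrow> 'm list
     \<Rightarrow> nat \<Rightarrow> 'm list set \<Rightarrow> ('m list \<Rightarrow> 'm list \<Rightarrow> 'm) \<Rightarrow> ('m list \<Rightarrow> 'm list \<Rightarrow> 'm list) \<Rightarrow> bool" where
  "def_action D m G dG mul e n X dX act \<longleftrightarrow>
     (\<forall>g\<in>G. \<forall>x\<in>X. act g x \<in> X) \<and>
     (\<forall>x\<in>X. act e x = x) \<and>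
     (\<forall>g\<in>G. \<forall>h\<in>G. \<forall>x\<in>X. act (mul g h) x = act g (act h x)) \<and>
     {g @ x @ act g x | g x. g \<in> G \<and> x \<in> X} \<in> D (m + n + n) \<and>
     mcont2 G dG X dX dX act"

definition def_function_to_M ::
  "(nat \<Rightarrow> 'm list set set) \<Rightarrow> nat \<Rightarrow> 'm list set \<Rightarrow> ('m list \<Rightarrow> 'm) \<Rightarrow> bool" where
  "def_function_to_M D n X f \<longleftrightarrow> {xs @ [f xs] | xs. xs \<in> X} \<in> D (Suc n)"

end

theory Submission
  imports Defs
begin

text \<open>
  Fix \<open>c > 0\<close> and let \<open>h(x) = min(c, d(x, A))\<close>: it is definable, 1-Lipschitz and
  vanishes exactly on the closed set \<open>A\<close>. Put \<open>f(x) = sup {h(g x) | g \<in> G}\<close>; the supremum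
  exists by definable completeness, \<open>f\<close> is \<open>G\<close>-invariant, and it vanishes exactly on \<open>A\<close>
  because \<open>A\<close> is invariant. As a supremum of continuous functions \<open>f\<close> is lower
  semicontinuous. Upper semicontinuity is where definable compactness enters: if
  \<open>f(x\<^sub>0) < b' < b\<close> but \<open>f(y) \<ge> b\<close> for \<open>y\<close> arbitrarily close to \<open>x\<^sub>0\<close>, then the closures of
  \<open>E\<^sub>t = {g | \<exists>y. d(x\<^sub>0, y) < t \<and> b' \<le> h(g y)}\<close> form a definable decreasing family of
  nonempty closed subsets of \<open>G\<close>. A common point \<open>g\<^sub>0\<close> has \<open>h(g\<^sub>0 x\<^sub>0) \<le> f(x\<^sub>0) < b'\<close>, which
  contradicts the joint continuity of \<open>(g, x) \<mapsto> h(g x)\<close> at \<open>(g\<^sub>0, x\<^sub>0)\<close>. All sets involved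
  are definable because they are defined by first-order formulas over the given definable sets.
\<close>

section \<open>Definable predicates and first-order formulas\<close>

definition definable_pred :: "(nat \<Rightarrow> 'm list set set) \<Rightarrow> nat \<Rightarrow> ('m list \<Rightarrow> bool) \<Rightarrow> bool" where
  "definable_pred D n P \<longleftrightarrow> {xs. length xs = n \<and> P xs} \<in> D n"

lemma definable_pred_cong:
  assumes "definable_pred D n P" and "\<And>xs. length xs = n \<Longrightarrow> P xs = Q xs"
  shows "definable_pred D n Q"
proof -
  have "{xs. length xs = n \<and> P xs} = {xs. length xs = n \<and> Q xs}" using assms(2) by blast
  with assms(1) show ?thesis unfolding definable_pred_def by simp
qed

lemma is_structureD:
  assumes "is_structure D"
  shows "\<And>n A. A \<in> D n \<Longrightarrow> A \<subseteq> {xs. length xs = n}"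
    and "\<And>n. {xs. length xs = n} \<in> D n"
    and "\<And>n A B. A \<in> D n \<Longrightarrow> B \<in> D n \<Longrightarrow> A \<union> B \<in> D n"
    and "\<And>n A. A \<in> D n \<Longrightarrow> {xs. length xs = n} - A \<in> D n"
    and "\<And>n A. A \<in> D n \<Longrightarrow> {y # xs | y xs. xs \<in> A} \<in> D (Suc n)"
    and "\<And>n i j. i < n \<Longrightarrow> j < n \<Longrightarrow> {xs. length xs = n \<and> xs ! i = xs ! j} \<in> D n"
    and "\<And>n A. A \<in> D (Suc n) \<Longrightarrow> butlast ` A \<in> D n"
  using assms unfolding is_structure_def by (elim conjE; simp)+

context
  fixes D :: "nat \<Rightarrow> 'm list set set"
  assumes D: "is_structure D"
begin

lemma definable_pred_mem: "S \<in> D n \<Longrightarrow> definable_pred D n (\<lambda>xs. xs \<in> S)"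
proof -
  assume "S \<in> D n"
  moreover have "{xs. length xs = n \<and> xs \<in> S} = S" using is_structureD(1)[OF D \<open>S \<in> D n\<close>] by blast
  ultimately show ?thesis unfolding definable_pred_def by simp
qed

lemma definable_pred_True: "definable_pred D n (\<lambda>_. True)"
  using is_structureD(2)[OF D] unfolding definable_pred_def by simp

lemma definable_pred_Not: "definable_pred D n P \<Longrightarrow> definable_pred D n (\<lambda>xs. \<not> P xs)"
proof -
  assume "definable_pred D n P"
  then have "{xs. length xs = n} - {xs. length xs = n \<and> P xs} \<in> D n"
    using is_structureD(4)[OF D] unfolding definable_pred_def by blast
  moreover have "{xs. length xs = n} - {xs. length xs = n \<and> P xs} = {xs. length xs = n \<and> \<not> P xs}"
    by blast
  ultimately show ?thesis unfolding definable_pred_def by simp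
qed

lemma definable_pred_disj:
  "definable_pred D n P \<Longrightarrow> definable_pred D n Q \<Longrightarrow> definable_pred D n (\<lambda>xs. P xs \<or> Q xs)"
proof -
  assume "definable_pred D n P" "definable_pred D n Q"
  then have "{xs. length xs = n \<and> P xs} \<union> {xs. length xs = n \<and> Q xs} \<in> D n"
    using is_structureD(3)[OF D] unfolding definable_pred_def by blast
  moreover have "{xs. length xs = n \<and> P xs} \<union> {xs. length xs = n \<and> Q xs} = {xs. length xs = n \<and> (P xs \<or> Q xs)}"
    by blast
  ultimately show ?thesis unfolding definable_pred_def by simp
qed

lemma definable_pred_conj:
  assumes "definable_pred D n P" "definable_pred D n Q"
  shows "definable_pred D n (\<lambda>xs. P xs \<and> Q xs)"
  using definable_pred_Not[OF definable_pred_disj[OF definable_pred_Not[OF assms(1)] definable_pred_Not[OF assms(2)]]]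
  by simp

lemma definable_pred_tl: "definable_pred D n P \<Longrightarrow> definable_pred D (Suc n) (\<lambda>zs. P (tl zs))"
proof -
  assume "definable_pred D n P"
  hence "{y # xs | y xs. xs \<in> {xs. length xs = n \<and> P xs}} \<in> D (Suc n)"
    using is_structureD(5)[OF D] unfolding definable_pred_def by blast
  moreover have "{y # xs | y xs. xs \<in> {xs. length xs = n \<and> P xs}} = {zs. length zs = Suc n \<and> P (tl zs)}"
  proof (intro set_eqI iffI)
    fix zs assume "zs \<in> {zs. length zs = Suc n \<and> P (tl zs)}"
    then show "zs \<in> {y # xs | y xs. xs \<in> {xs. length xs = n \<and> P xs}}"
      by (cases zs) auto
  qed auto
  ultimately show ?thesis unfolding definable_pred_def by simp
qed

lemma definable_pred_ex_last:
  "definable_pred D (Suc n) P \<Longrightarrow> definable_pred D n (\<lambda>xs. \<exists>y. P (xs @ [y]))"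
proof -
  assume "definable_pred D (Suc n) P"
  hence "butlast ` {zs. length zs = Suc n \<and> P zs} \<in> D n"
    unfolding definable_pred_def by (rule is_structureD(7)[OF D])
  moreover have "butlast ` {zs. length zs = Suc n \<and> P zs} = {xs. length xs = n \<and> (\<exists>y. P (xs @ [y]))}"
  proof (intro set_eqI iffI)
    fix xs assume "xs \<in> butlast ` {zs. length zs = Suc n \<and> P zs}"
    then obtain zs where zs: "length zs = Suc n" "P zs" "xs = butlast zs" by blast
    then have "zs = xs @ [last zs]" by (simp add: append_butlast_last_id[symmetric] length_greater_0_conv[symmetric] del: length_greater_0_conv)
    with zs show "xs \<in> {xs. length xs = n \<and> (\<exists>y. P (xs @ [y]))}"
      by (intro CollectI conjI exI[of _ "last zs"]) simp_all
  next
    fix xs assume "xs \<in> {xs. length xs = n \<and> (\<exists>y. P (xs @ [y]))}"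
    then obtain y where "length xs = n" "P (xs @ [y])" by blast
    then show "xs \<in> butlast ` {zs. length zs = Suc n \<and> P zs}"
      by (intro image_eqI[of _ _ "xs @ [y]"]) simp_all
  qed
  ultimately show ?thesis unfolding definable_pred_def by simp
qed

lemma definable_pred_nth_eq: "i < n \<Longrightarrow> j < n \<Longrightarrow> definable_pred D n (\<lambda>xs. xs ! i = xs ! j)"
  using is_structureD(6)[OF D] unfolding definable_pred_def by blast

lemma definable_pred_drop:
  "definable_pred D k P \<Longrightarrow> definable_pred D (j + k) (\<lambda>zs. P (drop j zs))"
proof (induction j)
  case (Suc j)
  then show ?case using definable_pred_tl[OF Suc.IH[OF Suc.prems]] by (simp add: drop_Suc)
qed simp

lemma definable_pred_all_less:
  fixes k :: nat
  shows "(\<And>i. i < k \<Longrightarrow> definable_pred D n (Q i)) \<Longrightarrow> definable_pred D n (\<lambda>xs. \<forall>i<k. Q i xs)"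
proof (induction k)
  case 0
  then show ?case using definable_pred_True by simp
next
  case (Suc k)
  then have "definable_pred D n (\<lambda>xs. (\<forall>i<k. Q i xs) \<and> Q k xs)" by (simp add: definable_pred_conj)
  then show ?case by (rule definable_pred_cong) (auto simp: less_Suc_eq)
qed

lemma definable_pred_ex_suffix:
  "definable_pred D (n + k) P \<Longrightarrow> definable_pred D n (\<lambda>xs. \<exists>ys. length ys = k \<and> P (xs @ ys))"
proof (induction k arbitrary: P)
  case 0
  then have "definable_pred D n P" by simp
  then show ?case by (rule definable_pred_cong) simp
next
  case (Suc k)
  have "definable_pred D (n + k) (\<lambda>zs. \<exists>y. P (zs @ [y]))"
    using Suc.prems by (intro definable_pred_ex_last) simp
  then have "definable_pred D n (\<lambda>xs. \<exists>ys. length ys = k \<and> (\<exists>y. P ((xs @ ys) @ [y])))"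
    by (rule Suc.IH)
  then show ?case
    by (rule definable_pred_cong) (simp only: length_Suc_conv_rev append.assoc, blast)
qed

lemma definable_pred_reindex:
  assumes \<sigma>: "\<And>i. i < k \<Longrightarrow> \<sigma> i < n" and P: "definable_pred D k P"
  shows "definable_pred D n (\<lambda>xs. P (map (\<lambda>i. xs ! \<sigma> i) [0..<k]))"
proof -
  have "definable_pred D (n + k) (\<lambda>zs. P (drop n zs) \<and> (\<forall>i<k. zs ! (n + i) = zs ! \<sigma> i))"
    using \<sigma> by (intro definable_pred_conj definable_pred_drop P definable_pred_all_less definable_pred_nth_eq)
      (auto simp: trans_less_add1)
  then have "definable_pred D n (\<lambda>xs. \<exists>ys. length ys = k \<and>
      P (drop n (xs @ ys)) \<and> (\<forall>i<k. (xs @ ys) ! (n + i) = (xs @ ys) ! \<sigma> i))"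
    by (rule definable_pred_ex_suffix)
  then show ?thesis
  proof (rule definable_pred_cong)
    fix xs :: "'m list" assume len: "length xs = n"
    show "(\<exists>ys. length ys = k \<and> P (drop n (xs @ ys)) \<and> (\<forall>i<k. (xs @ ys) ! (n + i) = (xs @ ys) ! \<sigma> i))
       = P (map (\<lambda>i. xs ! \<sigma> i) [0..<k])" (is "?L = ?R")
    proof
      assume ?L
      then obtain ys where ys: "length ys = k" "P ys" "\<forall>i<k. ys ! i = xs ! \<sigma> i"
        using len \<sigma> by (auto simp: nth_append)
      then have "ys = map (\<lambda>i. xs ! \<sigma> i) [0..<k]" by (intro nth_equalityI) auto
      then show ?R using ys by simp
    next
      assume ?R
      then show ?L using len \<sigma> by (intro exI[of _ "map (\<lambda>i. xs ! \<sigma> i) [0..<k]"]) (auto simp: nth_append)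
    qed
  qed
qed

end

datatype 'a formula = Atom "'a list set" "nat list" | Neg "'a formula" | Conj "'a formula" "'a formula"
  | Exi "'a formula"

text \<open>Variables are de Bruijn levels: \<^term>\<open>Exi p\<close> binds the variable whose index is the
  length of the current environment.\<close>

fun holds :: "'a formula \<Rightarrow> 'a list \<Rightarrow> bool" where
  "holds (Atom S vs) env \<longleftrightarrow> map (\<lambda>i. env ! i) vs \<in> S"
| "holds (Neg p) env \<longleftrightarrow> \<not> holds p env"
| "holds (Conj p q) env \<longleftrightarrow> holds p env \<and> holds q env"
| "holds (Exi p) env \<longleftrightarrow> (\<exists>y. holds p (env @ [y]))"

fun wf_formula :: "(nat \<Rightarrow> 'a list set set) \<Rightarrow> nat \<Rightarrow> 'a formula \<Rightarrow> bool" where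
  "wf_formula D n (Atom S vs) \<longleftrightarrow> S \<in> D (length vs) \<and> (\<forall>v\<in>set vs. v < n)"
| "wf_formula D n (Neg p) \<longleftrightarrow> wf_formula D n p"
| "wf_formula D n (Conj p q) \<longleftrightarrow> wf_formula D n p \<and> wf_formula D n q"
| "wf_formula D n (Exi p) \<longleftrightarrow> wf_formula D (Suc n) p"

lemma definable_pred_holds:
  assumes D: "is_structure D"
  shows "wf_formula D n p \<Longrightarrow> definable_pred D n (holds p)"
proof (induction p arbitrary: n)
  case (Atom S vs)
  then have "definable_pred D n (\<lambda>xs. map (\<lambda>i. xs ! (vs ! i)) [0..<length vs] \<in> S)"
    by (intro definable_pred_reindex[OF D] definable_pred_mem[OF D]) auto
  moreover have "map (\<lambda>i. xs ! (vs ! i)) [0..<length vs] = map (\<lambda>i. xs ! i) vs" for xs :: "'a list"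
    by (rule nth_equalityI) auto
  ultimately show ?case by (simp only: holds.simps)
next
  case (Neg p)
  then show ?case using definable_pred_Not[OF D] by simp
next
  case (Conj p q)
  then show ?case using definable_pred_conj[OF D] by simp
next
  case (Exi p)
  then show ?case using definable_pred_ex_last[OF D] by simp
qed

definition Disj :: "'a formula \<Rightarrow> 'a formula \<Rightarrow> 'a formula" where
  "Disj p q = Neg (Conj (Neg p) (Neg q))"

definition Exs :: "nat \<Rightarrow> 'a formula \<Rightarrow> 'a formula" where
  "Exs k p = (Exi ^^ k) p"

lemma holds_Disj [simp]: "holds (Disj p q) env \<longleftrightarrow> holds p env \<or> holds q env"
  by (simp add: Disj_def)

lemma wf_formula_Disj [simp]: "wf_formula D n (Disj p q) \<longleftrightarrow> wf_formula D n p \<and> wf_formula D n q"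
  by (simp add: Disj_def)

lemma holds_Exs [simp]: "holds (Exs k p) env \<longleftrightarrow> (\<exists>ys. length ys = k \<and> holds p (env @ ys))"
  unfolding Exs_def
proof (induction k arbitrary: env)
  case (Suc k)
  show ?case
    by (simp add: Suc.IH) (metis append.assoc append_Cons append_Nil length_Cons Suc_length_conv)
qed simp

lemma wf_formula_Exs [simp]: "wf_formula D n (Exs k p) \<longleftrightarrow> wf_formula D (n + k) p"
  unfolding Exs_def by (induction k arbitrary: n) auto

definition block :: "nat \<Rightarrow> nat \<Rightarrow> nat list" where
  "block i k = [i..<i + k]"

lemma map_nth_block [simp]: "i + k \<le> length env \<Longrightarrow> map ((!) env) (block i k) = take k (drop i env)"
  unfolding block_def by (rule nth_equalityI) auto

lemma length_block [simp]: "length (block i k) = k"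
  by (simp add: block_def)

lemma set_block [simp]: "set (block i k) = {i..<i + k}"
  by (simp add: block_def)

lemma definable_snoc_setI:
  assumes "definable_pred D (Suc k) Q" and "\<And>w s. length w = k \<Longrightarrow> Q (w @ [s]) \<longleftrightarrow> P w s"
  shows "{w @ [s] | w s. length w = k \<and> P w s} \<in> D (Suc k)"
proof -
  have "{xs. length xs = Suc k \<and> Q xs} = {w @ [s] | w s. length w = k \<and> P w s}"
    using assms(2) by (auto simp: length_Suc_conv_rev)
  with assms(1) show ?thesis unfolding definable_pred_def by simp
qed

lemma definable_cons_setI:
  assumes "definable_pred D (Suc k) Q" and "\<And>t g. length g = k \<Longrightarrow> Q (t # g) \<longleftrightarrow> P t g"
  shows "{t # g | t g. length g = k \<and> P t g} \<in> D (Suc k)"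
proof -
  have "{xs. length xs = Suc k \<and> Q xs} = {t # g | t g. length g = k \<and> P t g}"
    using assms(2) by (auto simp: length_Suc_conv)
  with assms(1) show ?thesis unfolding definable_pred_def by simp
qed

lemma definable_graph2I:
  assumes Q: "definable_pred D (k + n + 1) Q" and K: "K \<subseteq> {g. length g = k}" and X: "X \<subseteq> {x. length x = n}"
    and iff: "\<And>g x s. length g = k \<Longrightarrow> length x = n \<Longrightarrow> Q (g @ x @ [s]) \<longleftrightarrow> g \<in> K \<and> x \<in> X \<and> s = \<phi> g x"
  shows "{g @ x @ [\<phi> g x] | g x. g \<in> K \<and> x \<in> X} \<in> D (k + n + 1)"
proof -
  have "{xs. length xs = k + n + 1 \<and> Q xs} = {g @ x @ [\<phi> g x] | g x. g \<in> K \<and> x \<in> X}"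
  proof (intro set_eqI iffI)
    fix xs assume "xs \<in> {xs. length xs = k + n + 1 \<and> Q xs}"
    then obtain ys s where xs: "xs = ys @ [s]" "length ys = k + n" "Q xs"
      by (auto simp: length_Suc_conv_rev)
    then have split: "xs = take k ys @ drop k ys @ [s]" and "length (take k ys) = k" "length (drop k ys) = n"
      by auto
    then have "take k ys \<in> K" "drop k ys \<in> X" "s = \<phi> (take k ys) (drop k ys)"
      using iff xs(3) split by simp_all
    with split show "xs \<in> {g @ x @ [\<phi> g x] | g x. g \<in> K \<and> x \<in> X}" by blast
  next
    fix xs assume "xs \<in> {g @ x @ [\<phi> g x] | g x. g \<in> K \<and> x \<in> X}"
    then obtain g x where "xs = g @ x @ [\<phi> g x]" "g \<in> K" "x \<in> X" by blast
    moreover have "length g = k" "length x = n" using K X \<open>g \<in> K\<close> \<open>x \<in> X\<close> by auto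
    ultimately show "xs \<in> {xs. length xs = k + n + 1 \<and> Q xs}" using iff by simp
  qed
  with Q show ?thesis unfolding definable_pred_def by simp
qed

lemma mem_cons_set_iff: "length g = k \<Longrightarrow> t # g \<in> {t # g | t g. length g = k \<and> P t g} \<longleftrightarrow> P t g"
  by blast

lemma definable_subset_MI:
  assumes "definable_pred D 1 Q" and "\<And>s. Q [s] \<longleftrightarrow> s \<in> Y"
  shows "definable_subset_M D Y"
proof -
  have "{xs. length xs = 1 \<and> Q xs} = (\<lambda>y. [y]) ` Y"
    using assms(2) by (auto simp: length_Suc_conv)
  with assms(1) show ?thesis unfolding definable_pred_def definable_subset_M_def by simp
qed

section \<open>Suprema, semicontinuity and metric closures\<close>

definition is_lub :: "'a::linorder set \<Rightarrow> 'a \<Rightarrow> bool" where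
  "is_lub T s \<longleftrightarrow> (\<forall>t\<in>T. t \<le> s) \<and> (\<forall>s'. (\<forall>t\<in>T. t \<le> s') \<longrightarrow> s \<le> s')"

definition is_glb :: "'a::linorder set \<Rightarrow> 'a \<Rightarrow> bool" where
  "is_glb T s \<longleftrightarrow> (\<forall>t\<in>T. s \<le> t) \<and> (\<forall>s'. (\<forall>t\<in>T. s' \<le> t) \<longrightarrow> s' \<le> s)"

definition lub :: "'a::linorder set \<Rightarrow> 'a" where
  "lub T = (LEAST s. \<forall>t\<in>T. t \<le> s)"

definition glb :: "'a::linorder set \<Rightarrow> 'a" where
  "glb T = (GREATEST s. \<forall>t\<in>T. s \<le> t)"

lemma lub_eq: "is_lub T s \<Longrightarrow> lub T = s"
  unfolding is_lub_def lub_def by (intro Least_equality) auto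

lemma glb_eq: "is_glb T s \<Longrightarrow> glb T = s"
  unfolding is_glb_def glb_def by (intro Greatest_equality) auto

lemma is_lub_iff_eq: "is_lub T t \<Longrightarrow> is_lub T s \<longleftrightarrow> s = t"
  using lub_eq by metis

lemma is_glb_iff_eq: "is_glb T t \<Longrightarrow> is_glb T s \<longleftrightarrow> s = t"
  using glb_eq by metis

lemma graph_eq_of_unique:
  assumes "W \<subseteq> {w. length w = k}" and "\<And>w s. w \<in> W \<Longrightarrow> P w s \<longleftrightarrow> s = f w"
  shows "{w @ [s] | w s. length w = k \<and> (w \<in> W \<and> P w s)} = {w @ [f w] | w. w \<in> W}"
  using assms by blast

definition lsc_on :: "'a set \<Rightarrow> ('a \<Rightarrow> 'a \<Rightarrow> 'm::{linorder,zero}) \<Rightarrow> ('a \<Rightarrow> 'm) \<Rightarrow> bool" where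
  "lsc_on X d f \<longleftrightarrow> (\<forall>x\<in>X. \<forall>a. a < f x \<longrightarrow> (\<exists>\<delta>>0. \<forall>y\<in>X. d x y < \<delta> \<longrightarrow> a < f y))"

definition usc_on :: "'a set \<Rightarrow> ('a \<Rightarrow> 'a \<Rightarrow> 'm::{linorder,zero}) \<Rightarrow> ('a \<Rightarrow> 'm) \<Rightarrow> bool" where
  "usc_on X d f \<longleftrightarrow> (\<forall>x\<in>X. \<forall>b. f x < b \<longrightarrow> (\<exists>\<delta>>0. \<forall>y\<in>X. d x y < \<delta> \<longrightarrow> f y < b))"

definition usc2_on ::
  "'a set \<Rightarrow> ('a \<Rightarrow> 'a \<Rightarrow> 'm::{linorder,zero}) \<Rightarrow> 'b set \<Rightarrow> ('b \<Rightarrow> 'b \<Rightarrow> 'm) \<Rightarrow> ('a \<Rightarrow> 'b \<Rightarrow> 'm) \<Rightarrow> bool"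
where
  "usc2_on K dK X dX \<phi> \<longleftrightarrow> (\<forall>g\<in>K. \<forall>x\<in>X. \<forall>b. \<phi> g x < b \<longrightarrow>
     (\<exists>\<delta>>0. \<forall>g'\<in>K. \<forall>y\<in>X. dK g g' < \<delta> \<longrightarrow> dX x y < \<delta> \<longrightarrow> \<phi> g' y < b))"

lemma cont_to_M_if_lsc_usc:
  assumes lsc: "lsc_on X d f" and usc: "usc_on X d f"
  shows "cont_to_M X d f"
  unfolding cont_to_M_def
proof (intro ballI allI impI)
  fix x a b assume x: "x \<in> X" and ab: "a < f x \<and> f x < b"
  obtain \<delta>1 where \<delta>1: "0 < \<delta>1" "\<forall>y\<in>X. d x y < \<delta>1 \<longrightarrow> a < f y"
    using lsc x ab unfolding lsc_on_def by blast
  obtain \<delta>2 where \<delta>2: "0 < \<delta>2" "\<forall>y\<in>X. d x y < \<delta>2 \<longrightarrow> f y < b"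
    using usc x ab unfolding usc_on_def by blast
  show "\<exists>\<delta>>0. \<forall>y\<in>X. d x y < \<delta> \<longrightarrow> a < f y \<and> f y < b"
    using \<delta>1 \<delta>2 by (intro exI[of _ "min \<delta>1 \<delta>2"]) auto
qed

lemma mcont2_fix_left:
  fixes dY :: "'c \<Rightarrow> 'c \<Rightarrow> 'm::{linorder,zero}"
  assumes "mcont2 K dK X dX dY f" "g \<in> K" "dK g g = 0"
  shows "mcont X dX dY (f g)"
  unfolding mcont_def
proof (intro ballI allI impI)
  fix x and e :: 'm assume "x \<in> X" "0 < e"
  then obtain \<delta> where "0 < \<delta>" "\<forall>g'\<in>K. \<forall>y\<in>X. dK g g' < \<delta> \<longrightarrow> dX x y < \<delta> \<longrightarrow> dY (f g x) (f g' y) < e"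
    using assms(1,2) unfolding mcont2_def by blast
  with assms(2,3) show "\<exists>\<delta>>0. \<forall>y\<in>X. dX x y < \<delta> \<longrightarrow> dY (f g x) (f g y) < e" by auto
qed

lemma lsc_on_comp:
  assumes h: "lsc_on Y dY h" and f: "mcont X dX dY f" and fX: "f ` X \<subseteq> Y"
  shows "lsc_on X dX (\<lambda>x. h (f x))"
  unfolding lsc_on_def
proof (intro ballI allI impI)
  fix x a assume x: "x \<in> X" and a: "a < h (f x)"
  obtain \<epsilon> where \<epsilon>: "0 < \<epsilon>" "\<forall>z\<in>Y. dY (f x) z < \<epsilon> \<longrightarrow> a < h z"
    using h fX x a unfolding lsc_on_def by blast
  obtain \<delta> where "0 < \<delta>" "\<forall>y\<in>X. dX x y < \<delta> \<longrightarrow> dY (f x) (f y) < \<epsilon>"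
    using f x \<epsilon>(1) unfolding mcont_def by blast
  with \<epsilon>(2) fX show "\<exists>\<delta>>0. \<forall>y\<in>X. dX x y < \<delta> \<longrightarrow> a < h (f y)" by blast
qed

lemma usc2_on_comp:
  assumes h: "usc_on Y dY h" and act: "mcont2 K dK X dX dY act" and actY: "\<forall>g\<in>K. \<forall>x\<in>X. act g x \<in> Y"
  shows "usc2_on K dK X dX (\<lambda>g x. h (act g x))"
  unfolding usc2_on_def
proof (intro ballI allI impI)
  fix g x b assume g: "g \<in> K" and x: "x \<in> X" and b: "h (act g x) < b"
  obtain \<epsilon> where \<epsilon>: "0 < \<epsilon>" "\<forall>z\<in>Y. dY (act g x) z < \<epsilon> \<longrightarrow> h z < b"
    using h actY g x b unfolding usc_on_def by blast
  obtain \<delta> where "0 < \<delta>" "\<forall>g'\<in>K. \<forall>y\<in>X. dK g g' < \<delta> \<longrightarrow> dX x y < \<delta> \<longrightarrow> dY (act g x) (act g' y) < \<epsilon>"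
    using act g x \<epsilon>(1) unfolding mcont2_def by blast
  with \<epsilon>(2) actY
  show "\<exists>\<delta>>0. \<forall>g'\<in>K. \<forall>y\<in>X. dK g g' < \<delta> \<longrightarrow> dX x y < \<delta> \<longrightarrow> h (act g' y) < b" by blast
qed

lemma lsc_on_lub:
  assumes lsc: "\<And>g. g \<in> K \<Longrightarrow> lsc_on X d (\<phi> g)" and lub: "\<And>x. x \<in> X \<Longrightarrow> is_lub ((\<lambda>g. \<phi> g x) ` K) (F x)"
  shows "lsc_on X d F"
  unfolding lsc_on_def
proof (intro ballI allI impI)
  fix x a assume x: "x \<in> X" and a: "a < F x"
  have "\<not> (\<forall>g\<in>K. \<phi> g x \<le> a)"
    using lub[OF x] a unfolding is_lub_def by (metis image_iff leD)
  then obtain g where g: "g \<in> K" "a < \<phi> g x" by (auto simp: not_le)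
  then obtain \<delta> where "0 < \<delta>" "\<forall>y\<in>X. d x y < \<delta> \<longrightarrow> a < \<phi> g y"
    using lsc x unfolding lsc_on_def by blast
  moreover have "\<phi> g y \<le> F y" if "y \<in> X" for y
    using lub[OF that] g(1) unfolding is_lub_def by blast
  ultimately show "\<exists>\<delta>>0. \<forall>y\<in>X. d x y < \<delta> \<longrightarrow> a < F y" by (meson order.strict_trans2)
qed

definition mclosure :: "'a set \<Rightarrow> ('a \<Rightarrow> 'a \<Rightarrow> 'm::{linorder,zero}) \<Rightarrow> 'a set \<Rightarrow> 'a set" where
  "mclosure K d E = {g \<in> K. \<forall>r>0. \<exists>g'\<in>E. d g g' < r}"

lemma mclosure_mono: "E \<subseteq> E' \<Longrightarrow> mclosure K d E \<subseteq> mclosure K d E'"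
  unfolding mclosure_def by blast

definition superlevel_near ::
  "'a set \<Rightarrow> 'b set \<Rightarrow> ('b \<Rightarrow> 'b \<Rightarrow> 'm::linorder) \<Rightarrow> ('a \<Rightarrow> 'b \<Rightarrow> 'm) \<Rightarrow> 'b \<Rightarrow> 'm \<Rightarrow> 'm \<Rightarrow> 'a set"
where
  "superlevel_near K X dX \<phi> x0 b t = {g \<in> K. \<exists>y\<in>X. dX x0 y < t \<and> b \<le> \<phi> g y}"

lemma superlevel_near_mono: "t \<le> t' \<Longrightarrow> superlevel_near K X dX \<phi> x0 b t \<subseteq> superlevel_near K X dX \<phi> x0 b t'"
  unfolding superlevel_near_def by (blast intro: order.strict_trans2)

lemma superlevel_near_nonempty:
  assumes lub: "is_lub ((\<lambda>g. \<phi> g y) ` K) (F y)" and y: "y \<in> X" "dX c y < t" and b: "b < F y"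
  shows "superlevel_near K X dX \<phi> c b t \<noteq> {}"
proof -
  have "\<exists>g\<in>K. b < \<phi> g y"
  proof (rule ccontr)
    assume "\<not> ?thesis"
    then have "\<forall>t\<in>(\<lambda>g. \<phi> g y) ` K. t \<le> b" by (auto simp: not_less)
    then have "F y \<le> b" using lub unfolding is_lub_def by blast
    with b show False by simp
  qed
  with y show ?thesis unfolding superlevel_near_def by (blast intro: less_imp_le)
qed

lemma mem_graph_iff:
  assumes "K \<subseteq> {g. length g = k}" "X \<subseteq> {x. length x = n}" "length g = k" "length x = n"
  shows "g @ x @ z \<in> {g @ x @ F g x | g x. g \<in> K \<and> x \<in> X} \<longleftrightarrow> g \<in> K \<and> x \<in> X \<and> z = F g x"
proof
  assume "g @ x @ z \<in> {g @ x @ F g x | g x. g \<in> K \<and> x \<in> X}"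
  then obtain g' x' where eq: "g @ x @ z = g' @ x' @ F g' x'" and "g' \<in> K" "x' \<in> X" by blast
  moreover have "length g' = k" "length x' = n" using assms(1,2) \<open>g' \<in> K\<close> \<open>x' \<in> X\<close> by auto
  ultimately show "g \<in> K \<and> x \<in> X \<and> z = F g x" using assms(3,4) by simp
qed blast

lemma mem_graph2_iff:
  assumes "K \<subseteq> {g. length g = k}" "X \<subseteq> {x. length x = n}" "length g = k" "length x = n"
  shows "g @ x @ [s] \<in> {g @ x @ [\<phi> g x] | g x. g \<in> K \<and> x \<in> X} \<longleftrightarrow> g \<in> K \<and> x \<in> X \<and> s = \<phi> g x"
  using mem_graph_iff[OF assms, where F = "\<lambda>g x. [\<phi> g x]" and z = "[s]"] by simp

definition less_rel :: "'a::ord list set" where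
  "less_rel = {[x, y] | x y. x < y}"

lemma mem_less_rel [simp]: "[x, y] \<in> less_rel \<longleftrightarrow> x < y"
  unfolding less_rel_def by auto

section \<open>Definable completeness\<close>

locale definably_complete_expansion =
  fixes D :: "nat \<Rightarrow> ('m::{linorder,group_add}) list set set"
  assumes ordered_group: "\<forall>x y z::'m. x < y \<longrightarrow> z + x < z + y \<and> x + z < y + z"
    and dense: "\<forall>x y::'m. x < y \<longrightarrow> (\<exists>z. x < z \<and> z < y)"
    and no_endpoints: "\<forall>x::'m. \<exists>y z. y < x \<and> x < z"
    and D_structure: "is_structure D"
    and expansion: "expands_ordered_group D"
    and def_complete: "definably_complete D"
begin

lemma add_left_strict: "x < y \<Longrightarrow> z + x < z + (y::'m)"
  using ordered_group by blast

lemma add_right_strict: "x < y \<Longrightarrow> x + z < y + (z::'m)"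
  using ordered_group by blast

lemma add_left_weak: "x \<le> y \<Longrightarrow> z + x \<le> z + (y::'m)"
  using add_left_strict by (cases "x = y") (auto simp: order.order_iff_strict)

lemma add_both_strict: "x < a \<Longrightarrow> y < b \<Longrightarrow> x + y < a + (b::'m)"
  using add_right_strict[of x a y] add_left_strict[of y b a] by simp

lemma diff_pos: "a < b \<Longrightarrow> 0 < b - (a::'m)"
  using add_right_strict[of a b "- a"] by simp

lemma add_right_weak: "x \<le> y \<Longrightarrow> x + z \<le> y + (z::'m)"
  using add_right_strict by (cases "x = y") (auto simp: order.order_iff_strict)

lemma neg_nonpos: "0 \<le> d \<Longrightarrow> - d \<le> (0::'m)"
  using add_left_weak[of 0 d "- d"] by simp

lemma less_neg_add_of_less_diff: "d < h - a \<Longrightarrow> a < - d + (h::'m)"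
  using add_left_strict[OF add_right_strict[of d "h - a" a], of "- d"] by (simp add: add.assoc)

lemma less_rel_definable: "less_rel \<in> D 2"
  using expansion unfolding expands_ordered_group_def less_rel_def by blast

lemma const_definable: "{[a]} \<in> D 1"
  using expansion unfolding expands_ordered_group_def by blast

lemmas definable_holds = definable_pred_holds[OF D_structure]

lemma length_definable: "S \<in> D k \<Longrightarrow> S \<subseteq> {xs. length xs = k}"
  using is_structureD(1)[OF D_structure] .

lemma singleton_definable: "{p} \<in> D (length p)"
proof (induction p rule: rev_induct)
  case Nil
  have "{[]} = {xs. length xs = (0::nat)}" by auto
  then show ?case using is_structureD(2)[OF D_structure, of 0] by simp
next
  case (snoc a p)
  let ?p = "Conj (Atom {p} (block 0 (length p))) (Atom {[a]} [length p])"
  have "{w @ [s] | w s. length w = length p \<and> (w = p \<and> s = a)} \<in> D (Suc (length p))"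
  proof (rule definable_snoc_setI)
    show "definable_pred D (Suc (length p)) (holds ?p)"
      using snoc const_definable by (intro definable_holds) auto
    show "holds ?p (w @ [s]) \<longleftrightarrow> w = p \<and> s = a" if "length w = length p" for w s
      using that by (auto simp: nth_append)
  qed
  moreover have "{w @ [s] | w s. length w = length p \<and> (w = p \<and> s = a)} = {p @ [a]}" by auto
  ultimately show ?case by simp
qed

lemma definable_fibre:
  assumes S: "S \<in> D (Suc k)" and w: "length w = k"
  shows "definable_subset_M D {s. w @ [s] \<in> S}"
proof (rule definable_subset_MI)
  let ?p = "Exs k (Conj (Atom {w} (block 1 k)) (Atom S (block 1 k @ [0])))"
  show "definable_pred D 1 (holds ?p)"
    using S w singleton_definable[of w] by (intro definable_holds) auto
  show "holds ?p [s] \<longleftrightarrow> s \<in> {s. w @ [s] \<in> S}" for s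
    using w by (auto simp: nth_append)
qed

lemma definable_is_lub:
  assumes "definable_subset_M D T" "T \<noteq> {}" "bdd_above T"
  shows "is_lub T (lub T)"
proof -
  obtain s where "is_lub T s"
    using def_complete[unfolded definably_complete_def, rule_format, OF assms(1,2), THEN conjunct1,
      rule_format, OF assms(3)]
    unfolding is_lub_def by blast
  then show ?thesis using lub_eq[of T s] by simp
qed

lemma definable_is_glb:
  assumes "definable_subset_M D T" "T \<noteq> {}" "bdd_below T"
  shows "is_glb T (glb T)"
proof -
  obtain s where "is_glb T s"
    using def_complete[unfolded definably_complete_def, rule_format, OF assms(1,2), THEN conjunct2,
      rule_format, OF assms(3)]
    unfolding is_glb_def by blast
  then show ?thesis using glb_eq[of T s] by simp
qed

lemma definable_graph_lub:
  assumes S: "S \<in> D (Suc k)" and W: "W \<in> D k" and f: "\<And>w. w \<in> W \<Longrightarrow> is_lub {s. w @ [s] \<in> S} (f w)"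
  shows "{w @ [f w] | w. w \<in> W} \<in> D (Suc k)"
proof -
  let ?ub = "\<lambda>v. Neg (Exi (Conj (Atom S (block 0 k @ [Suc v])) (Atom less_rel [v, Suc v])))"
  let ?p = "Conj (Atom W (block 0 k)) (Conj (?ub k) (Neg (Exi (Conj (?ub (Suc k)) (Atom less_rel [Suc k, k])))))"
  have "{w @ [s] | w s. length w = k \<and> (w \<in> W \<and> is_lub {s. w @ [s] \<in> S} s)} \<in> D (Suc k)"
  proof (rule definable_snoc_setI)
    show "definable_pred D (Suc k) (holds ?p)"
      using S W less_rel_definable by (intro definable_holds) (auto simp: numeral_2_eq_2)
    show "holds ?p (w @ [s]) \<longleftrightarrow> w \<in> W \<and> is_lub {s. w @ [s] \<in> S} s" if "length w = k" for w s
      using that by (simp add: nth_append is_lub_def not_less, blast)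
  qed
  moreover have "{w @ [s] | w s. length w = k \<and> (w \<in> W \<and> is_lub {s. w @ [s] \<in> S} s)} = {w @ [f w] | w. w \<in> W}"
    using length_definable[OF W] is_lub_iff_eq[OF f] by (rule graph_eq_of_unique)
  ultimately show ?thesis by simp
qed

lemma definable_graph_glb:
  assumes S: "S \<in> D (Suc k)" and W: "W \<in> D k" and f: "\<And>w. w \<in> W \<Longrightarrow> is_glb {s. w @ [s] \<in> S} (f w)"
  shows "{w @ [f w] | w. w \<in> W} \<in> D (Suc k)"
proof -
  let ?lb = "\<lambda>v. Neg (Exi (Conj (Atom S (block 0 k @ [Suc v])) (Atom less_rel [Suc v, v])))"
  let ?p = "Conj (Atom W (block 0 k)) (Conj (?lb k) (Neg (Exi (Conj (?lb (Suc k)) (Atom less_rel [k, Suc k])))))"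
  have "{w @ [s] | w s. length w = k \<and> (w \<in> W \<and> is_glb {s. w @ [s] \<in> S} s)} \<in> D (Suc k)"
  proof (rule definable_snoc_setI)
    show "definable_pred D (Suc k) (holds ?p)"
      using S W less_rel_definable by (intro definable_holds) (auto simp: numeral_2_eq_2)
    show "holds ?p (w @ [s]) \<longleftrightarrow> w \<in> W \<and> is_glb {s. w @ [s] \<in> S} s" if "length w = k" for w s
      using that by (simp add: nth_append is_glb_def not_less, blast)
  qed
  moreover have "{w @ [s] | w s. length w = k \<and> (w \<in> W \<and> is_glb {s. w @ [s] \<in> S} s)} = {w @ [f w] | w. w \<in> W}"
    using length_definable[OF W] is_glb_iff_eq[OF f] by (rule graph_eq_of_unique)
  ultimately show ?thesis by simp
qed

lemma definable_graph_projection: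
  assumes K: "K \<in> D k" and X: "X \<in> D n" and graph: "{g @ x @ [\<phi> g x] | g x. g \<in> K \<and> x \<in> X} \<in> D (k + n + 1)"
  shows "{x @ [\<phi> g x] | g x. g \<in> K \<and> x \<in> X} \<in> D (Suc n)"
proof -
  define \<Gamma> where "\<Gamma> = {g @ x @ [\<phi> g x] | g x. g \<in> K \<and> x \<in> X}"
  have \<Gamma>_iff: "g @ x @ [s] \<in> \<Gamma> \<longleftrightarrow> g \<in> K \<and> x \<in> X \<and> s = \<phi> g x" if "length g = k" "length x = n" for g x s
    unfolding \<Gamma>_def using mem_graph2_iff[OF length_definable[OF K] length_definable[OF X] that] .
  let ?p = "Exs k (Atom \<Gamma> (block (Suc n) k @ block 0 n @ [n]))"
  have "{x @ [s] | x s. length x = n \<and> (\<exists>g\<in>K. x \<in> X \<and> s = \<phi> g x)} \<in> D (Suc n)"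
  proof (rule definable_snoc_setI)
    show "definable_pred D (Suc n) (holds ?p)"
      using graph unfolding \<Gamma>_def by (intro definable_holds) auto
    show "holds ?p (x @ [s]) \<longleftrightarrow> (\<exists>g\<in>K. x \<in> X \<and> s = \<phi> g x)" if "length x = n" for x s
      using that length_definable[OF K] by (simp add: nth_append \<Gamma>_iff cong: conj_cong) blast
  qed
  moreover have "{x @ [s] | x s. length x = n \<and> (\<exists>g\<in>K. x \<in> X \<and> s = \<phi> g x)} =
      {x @ [\<phi> g x] | g x. g \<in> K \<and> x \<in> X}"
    using length_definable[OF X] by blast
  ultimately show ?thesis by simp
qed

section \<open>Suprema over a definably compact parameter set\<close>

lemma subset_mclosure:
  assumes "def_metric_space D k K d" "E \<subseteq> K"
  shows "E \<subseteq> mclosure K d E"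
proof
  fix g assume "g \<in> E"
  moreover have "d g g = 0" using assms \<open>g \<in> E\<close> unfolding def_metric_space_def by blast
  ultimately show "g \<in> mclosure K d E" using assms(2) unfolding mclosure_def by (auto intro!: bexI[of _ g])
qed

lemma closed_mclosure:
  assumes K: "def_metric_space D k K d" and E: "E \<subseteq> K"
  shows "closed_in_metric K d (mclosure K d E)"
  unfolding closed_in_metric_def
proof (intro conjI ballI)
  show "mclosure K d E \<subseteq> K" unfolding mclosure_def by blast
  fix g assume g: "g \<in> K - mclosure K d E"
  then obtain r where r: "0 < r" "\<forall>g'\<in>E. \<not> d g g' < r" unfolding mclosure_def by auto
  obtain s where s: "0 < s" "s < r" using dense r(1) by blast
  have "y \<notin> mclosure K d E" if y: "y \<in> K" "d g y < r - s" for y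
  proof
    assume "y \<in> mclosure K d E"
    then obtain g' where g': "g' \<in> E" "d y g' < s" using s(1) unfolding mclosure_def by blast
    have "d g g' \<le> d g y + d y g'"
      using K g y(1) E g'(1) unfolding def_metric_space_def by blast
    also have "\<dots> < r - s + s" using add_both_strict[OF y(2) g'(2)] .
    finally show False using r(2) g'(1) by simp
  qed
  then show "\<exists>r>0. \<forall>y\<in>K. d g y < r \<longrightarrow> y \<notin> mclosure K d E" using diff_pos[OF s(2)] by blast
qed

lemma definable_superlevel_near_family:
  assumes K: "K \<in> D k" and X: "def_metric_space D n X dX"
    and graph: "{g @ x @ [\<phi> g x] | g x. g \<in> K \<and> x \<in> X} \<in> D (k + n + 1)" and x0: "x0 \<in> X"
  shows "{t # g | t g. length g = k \<and> g \<in> superlevel_near K X dX \<phi> x0 b t} \<in> D (Suc k)"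
proof (rule definable_cons_setI)
  have XD: "X \<in> D n" and dist: "{x @ y @ [dX x y] | x y. x \<in> X \<and> y \<in> X} \<in> D (2 * n + 1)"
    using X unfolding def_metric_space_def by blast+
  define \<Gamma> where "\<Gamma> = {g @ x @ [\<phi> g x] | g x. g \<in> K \<and> x \<in> X}"
  define \<Delta> where "\<Delta> = {x @ y @ [dX x y] | x y. x \<in> X \<and> y \<in> X}"
  have \<Gamma>_iff: "g @ x @ [s] \<in> \<Gamma> \<longleftrightarrow> g \<in> K \<and> x \<in> X \<and> s = \<phi> g x" if "length g = k" "length x = n" for g x s
    unfolding \<Gamma>_def using mem_graph2_iff[OF length_definable[OF K] length_definable[OF XD] that] .
  have \<Delta>_iff: "x @ y @ [s] \<in> \<Delta> \<longleftrightarrow> x \<in> X \<and> y \<in> X \<and> s = dX x y" if "length x = n" "length y = n" for x y s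
    unfolding \<Delta>_def using mem_graph2_iff[OF length_definable[OF XD] length_definable[OF XD] that] .
  let ?p = "Conj (Atom K (block 1 k)) (Exs n (Conj (Atom X (block (Suc k) n)) (Conj
      (Exs n (Conj (Atom {x0} (block (Suc k + n) n))
        (Exi (Conj (Atom \<Delta> (block (Suc k + n) n @ block (Suc k) n @ [Suc k + n + n])) (Atom less_rel [Suc k + n + n, 0])))))
      (Exi (Conj (Atom \<Gamma> (block 1 k @ block (Suc k) n @ [Suc k + n]))
        (Neg (Exi (Conj (Atom {[b]} [Suc (Suc k + n)]) (Atom less_rel [Suc k + n, Suc (Suc k + n)])))))))))"
  show "definable_pred D (Suc k) (holds ?p)"
    using K XD graph dist const_definable less_rel_definable singleton_definable[of x0]
      length_definable[OF XD] x0 unfolding \<Gamma>_def \<Delta>_def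
    by (intro definable_holds) (auto simp: numeral_2_eq_2 mult_2 add.assoc)
  show "holds ?p (t # g) \<longleftrightarrow> g \<in> superlevel_near K X dX \<phi> x0 b t" if "length g = k" for t g
    using that x0 length_definable[OF XD]
    by (simp add: nth_append \<Gamma>_iff \<Delta>_iff superlevel_near_def not_less cong: conj_cong) blast
qed

lemma definable_mclosure_family:
  assumes K: "def_metric_space D k K d" and E: "{t # g | t g. length g = k \<and> g \<in> E t} \<in> D (Suc k)"
    and EK: "\<And>t. E t \<subseteq> K"
  shows "{t # g | t g. length g = k \<and> g \<in> mclosure K d (E t)} \<in> D (Suc k)"
proof (rule definable_cons_setI)
  have KD: "K \<in> D k" and dist: "{x @ y @ [d x y] | x y. x \<in> K \<and> y \<in> K} \<in> D (2 * k + 1)"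
    using K unfolding def_metric_space_def by blast+
  define \<Delta> where "\<Delta> = {x @ y @ [d x y] | x y. x \<in> K \<and> y \<in> K}"
  define \<E> where "\<E> = {t # g | t g. length g = k \<and> g \<in> E t}"
  have \<Delta>_iff: "x @ y @ [s] \<in> \<Delta> \<longleftrightarrow> x \<in> K \<and> y \<in> K \<and> s = d x y" if "length x = k" "length y = k" for x y s
    unfolding \<Delta>_def using mem_graph2_iff[OF length_definable[OF KD] length_definable[OF KD] that] .
  have \<E>_iff: "t # g \<in> \<E> \<longleftrightarrow> g \<in> E t" if "length g = k" for t g
    unfolding \<E>_def using mem_cons_set_iff[OF that] .
  let ?p = "Conj (Atom K (block 1 k)) (Neg (Exi (Conj
      (Exi (Conj (Atom {[0]} [Suc (Suc k)]) (Atom less_rel [Suc (Suc k), Suc k])))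
      (Neg (Exs k (Conj (Atom \<E> (0 # block (Suc (Suc k)) k))
        (Exi (Conj (Atom \<Delta> (block 1 k @ block (Suc (Suc k)) k @ [Suc (Suc k) + k]))
          (Atom less_rel [Suc (Suc k) + k, Suc k])))))))))"
  show "definable_pred D (Suc k) (holds ?p)"
    using KD E dist const_definable less_rel_definable unfolding \<Delta>_def \<E>_def
    by (intro definable_holds) (auto simp: numeral_2_eq_2 mult_2 add.assoc)
  show "holds ?p (t # g) \<longleftrightarrow> g \<in> mclosure K d (E t)" if "length g = k" for t g
    using that length_definable[OF KD] EK[of t]
    by (simp add: nth_append \<Delta>_iff \<E>_iff mclosure_def cong: conj_cong) blast
qed

lemma fibres_of_cons_family:
  assumes "\<And>t. C t \<subseteq> {g. length g = k}"
  defines "S \<equiv> {t # g | t g. length g = k \<and> g \<in> C t}"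
  shows "(\<lambda>t. {g. t @ g \<in> S}) ` {t. length t = 1 \<and> (\<exists>g. t @ g \<in> S)} = {C t | t. C t \<noteq> {}}"
proof -
  have fibre: "{g. [t] @ g \<in> S} = C t" for t
    using assms unfolding S_def by auto
  show ?thesis
  proof (intro set_eqI iffI)
    fix F assume "F \<in> (\<lambda>t. {g. t @ g \<in> S}) ` {t. length t = 1 \<and> (\<exists>g. t @ g \<in> S)}"
    then obtain t g where t: "length t = 1" "t @ g \<in> S" "F = {g. t @ g \<in> S}" by blast
    then obtain \<tau> where "t = [\<tau>]" by (auto simp: length_Suc_conv)
    with t have "g \<in> C \<tau>" "F = C \<tau>" using fibre[of \<tau>] by auto
    then show "F \<in> {C t | t. C t \<noteq> {}}" by blast
  next
    fix F assume "F \<in> {C t | t. C t \<noteq> {}}"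
    then obtain \<tau> g where "F = C \<tau>" "g \<in> C \<tau>" by blast
    then have "F = {g. [\<tau>] @ g \<in> S}" "[\<tau>] @ g \<in> S" using fibre by auto
    then show "F \<in> (\<lambda>t. {g. t @ g \<in> S}) ` {t. length t = 1 \<and> (\<exists>g. t @ g \<in> S)}"
      by (intro image_eqI[of _ _ "[\<tau>]"]) auto
  qed
qed

lemma definably_compact_monotone_family:
  assumes K: "K \<in> D k" and compact: "definably_compact D k K d"
    and C: "{t # g | t g. length g = k \<and> g \<in> C t} \<in> D (Suc k)"
    and closed: "\<And>t. closed_in_metric K d (C t)" and mono: "\<And>t t'. t \<le> t' \<Longrightarrow> C t \<subseteq> C t'"
  shows "\<exists>g\<in>K. \<forall>t. C t \<noteq> {} \<longrightarrow> g \<in> C t"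
proof -
  define S where "S = {t # g | t g. length g = k \<and> g \<in> C t}"
  define Fam where "Fam = (\<lambda>t. {g. t @ g \<in> S}) ` {t. length t = 1 \<and> (\<exists>g. t @ g \<in> S)}"
  have "C t \<subseteq> {g. length g = k}" for t
    using closed[of t] length_definable[OF K] unfolding closed_in_metric_def by blast
  then have Fam: "Fam = {C t | t. C t \<noteq> {}}"
    unfolding Fam_def S_def by (rule fibres_of_cons_family)
  have "S \<in> D (1 + k)" using C unfolding S_def by simp
  note compact_S = compact[unfolded definably_compact_def Let_def, THEN spec[of _ 1], THEN spec[of _ S],
      THEN mp, OF this, folded Fam_def]
  have nonempty_closed: "\<forall>F\<in>Fam. F \<noteq> {} \<and> closed_in_metric K d F"
    using closed unfolding Fam by blast
  have filtered: "\<forall>F1\<in>Fam. \<forall>F2\<in>Fam. \<exists>F3\<in>Fam. F3 \<subseteq> F1 \<inter> F2"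
  proof (intro ballI)
    fix F1 F2 assume "F1 \<in> Fam" "F2 \<in> Fam"
    then obtain t1 t2 where F: "F1 = C t1" "C t1 \<noteq> {}" "F2 = C t2" "C t2 \<noteq> {}" unfolding Fam by blast
    have "C (min t1 t2) \<noteq> {}" using F(2,4) by (simp add: min_def)
    then have "C (min t1 t2) \<in> Fam" unfolding Fam by blast
    moreover have "C (min t1 t2) \<subseteq> F1 \<inter> F2"
      using mono[OF min.cobounded1] mono[OF min.cobounded2] F(1,3) by blast
    ultimately show "\<exists>F3\<in>Fam. F3 \<subseteq> F1 \<inter> F2" by blast
  qed
  obtain g where g: "g \<in> K" "\<forall>F\<in>Fam. g \<in> F"
    using mp[OF mp[OF compact_S nonempty_closed] filtered] by blast
  have "g \<in> C t" if "C t \<noteq> {}" for t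
    using that g(2) unfolding Fam by blast
  with g(1) show ?thesis by blast
qed

lemma mclosure_superlevel_near_common_point:
  assumes K: "def_metric_space D k K dK" and compact: "definably_compact D k K dK"
    and X: "def_metric_space D n X dX"
    and graph: "{g @ x @ [\<phi> g x] | g x. g \<in> K \<and> x \<in> X} \<in> D (k + n + 1)" and x0: "x0 \<in> X"
  shows "\<exists>g0\<in>K. \<forall>t. mclosure K dK (superlevel_near K X dX \<phi> x0 b t) \<noteq> {} \<longrightarrow>
    g0 \<in> mclosure K dK (superlevel_near K X dX \<phi> x0 b t)"
proof -
  have KD: "K \<in> D k" using K unfolding def_metric_space_def by blast
  have E_K: "superlevel_near K X dX \<phi> x0 b t \<subseteq> K" for t
    unfolding superlevel_near_def by blast
  show ?thesis
  proof (rule definably_compact_monotone_family[OF KD compact])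
    show "{t # g | t g. length g = k \<and> g \<in> mclosure K dK (superlevel_near K X dX \<phi> x0 b t)} \<in> D (Suc k)"
      using definable_mclosure_family[OF K definable_superlevel_near_family[OF KD X graph x0] E_K] .
    show "closed_in_metric K dK (mclosure K dK (superlevel_near K X dX \<phi> x0 b t))" for t
      using closed_mclosure[OF K E_K] .
    show "mclosure K dK (superlevel_near K X dX \<phi> x0 b t) \<subseteq> mclosure K dK (superlevel_near K X dX \<phi> x0 b t')"
      if "t \<le> t'" for t t'
      using mclosure_mono[OF superlevel_near_mono[OF that]] .
  qed
qed

lemma usc_on_lub_over_compact:
  assumes K: "def_metric_space D k K dK" and compact: "definably_compact D k K dK"
    and X: "def_metric_space D n X dX"
    and graph: "{g @ x @ [\<phi> g x] | g x. g \<in> K \<and> x \<in> X} \<in> D (k + n + 1)"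
    and usc: "usc2_on K dK X dX \<phi>" and lub: "\<And>x. x \<in> X \<Longrightarrow> is_lub ((\<lambda>g. \<phi> g x) ` K) (F x)"
  shows "usc_on X dX F"
  unfolding usc_on_def
proof (intro ballI allI impI)
  fix x0 b assume x0: "x0 \<in> X" and b: "F x0 < b"
  obtain b' where b': "F x0 < b'" "b' < b" using dense b by blast
  define C where "C t = mclosure K dK (superlevel_near K X dX \<phi> x0 b' t)" for t
  obtain g0 where g0: "g0 \<in> K" "\<And>t. C t \<noteq> {} \<Longrightarrow> g0 \<in> C t"
    using mclosure_superlevel_near_common_point[OF K compact X graph x0, of b'] unfolding C_def by blast
  have "\<phi> g0 x0 \<le> F x0" using lub[OF x0] g0(1) unfolding is_lub_def by blast
  then have "\<phi> g0 x0 < b'" using b'(1) by (rule le_less_trans)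
  then obtain \<delta> where \<delta>: "0 < \<delta>" "\<forall>g'\<in>K. \<forall>y\<in>X. dK g0 g' < \<delta> \<longrightarrow> dX x0 y < \<delta> \<longrightarrow> \<phi> g' y < b'"
    using usc[unfolded usc2_on_def, rule_format, OF g0(1) x0] by blast
  show "\<exists>\<delta>>0. \<forall>y\<in>X. dX x0 y < \<delta> \<longrightarrow> F y < b"
  proof (rule ccontr)
    assume "\<not> ?thesis"
    then obtain y where y: "y \<in> X" "dX x0 y < \<delta>" "\<not> F y < b" using \<delta>(1) by blast
    then have "b' < F y" using b'(2) by (simp add: not_less less_le_trans)
    then have "superlevel_near K X dX \<phi> x0 b' \<delta> \<noteq> {}"
      by (rule superlevel_near_nonempty[where \<phi> = \<phi> and K = K and F = F and dX = dX and c = x0, OF lub[OF y(1)] y(1,2)])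
    then have "C \<delta> \<noteq> {}"
      unfolding C_def using subset_mclosure[OF K, of "superlevel_near K X dX \<phi> x0 b' \<delta>"]
      unfolding superlevel_near_def by blast
    then obtain g' where "g' \<in> superlevel_near K X dX \<phi> x0 b' \<delta>" "dK g0 g' < \<delta>"
      using g0(2)[of \<delta>] \<delta>(1) unfolding C_def mclosure_def by blast
    then obtain z where "g' \<in> K" "z \<in> X" "dX x0 z < \<delta>" "b' \<le> \<phi> g' z"
      unfolding superlevel_near_def by blast
    with \<delta>(2) \<open>dK g0 g' < \<delta>\<close> show False by (blast dest: leD)
  qed
qed

lemma definable_is_lub_image:
  assumes K: "K \<in> D k" "K \<noteq> {}" and X: "X \<in> D n"
    and graph: "{g @ x @ [\<phi> g x] | g x. g \<in> K \<and> x \<in> X} \<in> D (k + n + 1)"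
    and bdd: "bdd_above ((\<lambda>g. \<phi> g x) ` K)" and x: "x \<in> X"
  shows "is_lub ((\<lambda>g. \<phi> g x) ` K) (lub ((\<lambda>g. \<phi> g x) ` K))"
proof -
  let ?S = "{x @ [\<phi> g x] | g x. g \<in> K \<and> x \<in> X}"
  have "{s. x @ [s] \<in> ?S} = (\<lambda>g. \<phi> g x) ` K"
    using x length_definable[OF X] by auto
  moreover have "definable_subset_M D {s. x @ [s] \<in> ?S}"
    using definable_fibre[OF definable_graph_projection[OF K(1) X graph], of x] x length_definable[OF X]
    by blast
  ultimately show ?thesis using definable_is_lub K(2) bdd by simp
qed

theorem lub_over_compact_definable_continuous:
  assumes K: "def_metric_space D k K dK" "definably_compact D k K dK" "K \<noteq> {}"
    and X: "def_metric_space D n X dX"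
    and graph: "{g @ x @ [\<phi> g x] | g x. g \<in> K \<and> x \<in> X} \<in> D (k + n + 1)"
    and bdd: "\<And>x. x \<in> X \<Longrightarrow> bdd_above ((\<lambda>g. \<phi> g x) ` K)"
    and lsc: "\<And>g. g \<in> K \<Longrightarrow> lsc_on X dX (\<phi> g)"
    and usc: "usc2_on K dK X dX \<phi>"
  shows "def_function_to_M D n X (\<lambda>x. lub ((\<lambda>g. \<phi> g x) ` K))"
    and "cont_to_M X dX (\<lambda>x. lub ((\<lambda>g. \<phi> g x) ` K))"
proof -
  let ?S = "{x @ [\<phi> g x] | g x. g \<in> K \<and> x \<in> X}"
  have KD: "K \<in> D k" and XD: "X \<in> D n" using K(1) X unfolding def_metric_space_def by blast+
  have lub: "is_lub ((\<lambda>g. \<phi> g x) ` K) (lub ((\<lambda>g. \<phi> g x) ` K))" if "x \<in> X" for x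
    using definable_is_lub_image[OF KD K(3) XD graph bdd[OF that] that] .
  have "{s. x @ [s] \<in> ?S} = (\<lambda>g. \<phi> g x) ` K" if "x \<in> X" for x
    using that length_definable[OF XD] by auto
  then show "def_function_to_M D n X (\<lambda>x. lub ((\<lambda>g. \<phi> g x) ` K))"
    unfolding def_function_to_M_def using definable_graph_lub[OF definable_graph_projection[OF KD XD graph] XD] lub
    by simp
  show "cont_to_M X dX (\<lambda>x. lub ((\<lambda>g. \<phi> g x) ` K))"
    using cont_to_M_if_lsc_usc[OF lsc_on_lub[OF lsc lub] usc_on_lub_over_compact[OF K(1,2) X graph usc lub]] .
qed

end

section \<open>The invariant function\<close>

locale invariant_closed_subset = definably_complete_expansion D
  for D :: "nat \<Rightarrow> ('m::{linorder,group_add}) list set set" +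
  fixes m n :: nat
    and G :: "'m list set" and dG :: "'m list \<Rightarrow> 'm list \<Rightarrow> 'm"
    and mul :: "'m list \<Rightarrow> 'm list \<Rightarrow> 'm list" and ginv :: "'m list \<Rightarrow> 'm list" and e :: "'m list"
    and X :: "'m list set" and dX :: "'m list \<Rightarrow> 'm list \<Rightarrow> 'm"
    and act :: "'m list \<Rightarrow> 'm list \<Rightarrow> 'm list"
    and A :: "'m list set"
  assumes G_group: "def_metric_group D m G dG mul ginv e"
    and G_compact: "definably_compact D m G dG"
    and X_space: "def_metric_space D n X dX"
    and action: "def_action D m G dG mul e n X dX act"
    and A_definable: "A \<in> D n"
    and A_closed: "closed_in_metric X dX A"
    and A_invariant: "\<forall>g\<in>G. \<forall>x\<in>A. act g x \<in> A"
begin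

lemma G_space: "def_metric_space D m G dG"
  using G_group unfolding def_metric_group_def by blast

lemma G_definable: "G \<in> D m" and X_definable: "X \<in> D n"
  using G_space X_space unfolding def_metric_space_def by blast+

lemma A_subset: "A \<subseteq> X"
  using A_closed unfolding closed_in_metric_def by blast

lemma dX_metric:
  "x \<in> X \<Longrightarrow> y \<in> X \<Longrightarrow> 0 \<le> dX x y \<and> (dX x y = 0 \<longleftrightarrow> x = y) \<and> dX x y = dX y x"
  "x \<in> X \<Longrightarrow> y \<in> X \<Longrightarrow> z \<in> X \<Longrightarrow> dX x z \<le> dX x y + dX y z"
  using X_space unfolding def_metric_space_def by blast+

lemma dG_self: "g \<in> G \<Longrightarrow> dG g g = 0"
  using G_space unfolding def_metric_space_def by blast

lemma act_closed: "g \<in> G \<Longrightarrow> x \<in> X \<Longrightarrow> act g x \<in> X"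
  and act_e: "x \<in> X \<Longrightarrow> act e x = x"
  and act_mul: "g \<in> G \<Longrightarrow> h \<in> G \<Longrightarrow> x \<in> X \<Longrightarrow> act (mul g h) x = act g (act h x)"
  and act_cont: "mcont2 G dG X dX dX act"
  and action_graph: "{g @ x @ act g x | g x. g \<in> G \<and> x \<in> X} \<in> D (m + n + n)"
  using action unfolding def_action_def by blast+

lemma e_in_G: "e \<in> G"
  and mul_closed: "g \<in> G \<Longrightarrow> h \<in> G \<Longrightarrow> mul g h \<in> G"
  and ginv_closed: "g \<in> G \<Longrightarrow> ginv g \<in> G"
  and mul_assoc: "g \<in> G \<Longrightarrow> h \<in> G \<Longrightarrow> k \<in> G \<Longrightarrow> mul (mul g h) k = mul g (mul h k)"
  and mul_e: "g \<in> G \<Longrightarrow> mul g e = g"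
  and ginv_mul: "g \<in> G \<Longrightarrow> mul (ginv g) g = e"
  using G_group unfolding def_metric_group_def by blast+

lemma act_invertible: "g \<in> G \<Longrightarrow> h \<in> G \<Longrightarrow> x \<in> X \<Longrightarrow> act g x = act (mul g (ginv h)) (act h x)"
  by (simp add: act_mul[symmetric] mul_closed ginv_closed mul_assoc ginv_mul mul_e)

text \<open>Truncating at \<open>c0\<close> keeps \<open>dist_values x\<close> nonempty when \<open>A = {}\<close>.\<close>

definition c0 :: 'm where
  "c0 = (SOME c. 0 < c)"

lemma c0_pos: "0 < c0"
proof -
  have "\<exists>c::'m. 0 < c" using no_endpoints by blast
  then show ?thesis unfolding c0_def by (rule someI_ex)
qed

definition dist_values :: "'m list \<Rightarrow> 'm set" where
  "dist_values x = insert c0 (dX x ` A)"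

definition trunc_dist :: "'m list \<Rightarrow> 'm" where
  "trunc_dist x = glb (dist_values x)"

lemma definable_dist_values:
  "{x @ [s] | x s. length x = n \<and> (x \<in> X \<and> s \<in> dist_values x)} \<in> D (Suc n)"
proof (rule definable_snoc_setI)
  define \<Delta> where "\<Delta> = {x @ y @ [dX x y] | x y. x \<in> X \<and> y \<in> X}"
  have \<Delta>: "\<Delta> \<in> D (2 * n + 1)" using X_space unfolding def_metric_space_def \<Delta>_def by blast
  have \<Delta>_iff: "x @ y @ [s] \<in> \<Delta> \<longleftrightarrow> x \<in> X \<and> y \<in> X \<and> s = dX x y" if "length x = n" "length y = n" for x y s
    unfolding \<Delta>_def using mem_graph2_iff[OF length_definable[OF X_definable] length_definable[OF X_definable] that] .
  let ?p = "Conj (Atom X (block 0 n)) (Disj (Atom {[c0]} [n])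
    (Exs n (Conj (Atom A (block (Suc n) n)) (Atom \<Delta> (block 0 n @ block (Suc n) n @ [n])))))"
  show "definable_pred D (Suc n) (holds ?p)"
    using X_definable A_definable const_definable \<Delta> by (intro definable_holds) (auto simp: mult_2)
  show "holds ?p (x @ [s]) \<longleftrightarrow> x \<in> X \<and> s \<in> dist_values x" if "length x = n" for x s
    using that A_subset length_definable[OF A_definable]
    by (simp add: nth_append \<Delta>_iff dist_values_def cong: conj_cong) blast
qed

lemma trunc_dist_is_glb: "x \<in> X \<Longrightarrow> is_glb (dist_values x) (trunc_dist x)"
  unfolding trunc_dist_def
proof (rule definable_is_glb)
  assume x: "x \<in> X"
  have "{s. x @ [s] \<in> {x @ [s] | x s. length x = n \<and> (x \<in> X \<and> s \<in> dist_values x)}} = dist_values x"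
    using x length_definable[OF X_definable] by auto
  then show "definable_subset_M D (dist_values x)"
    using definable_fibre[OF definable_dist_values, of x] x length_definable[OF X_definable] by auto
  show "dist_values x \<noteq> {}" unfolding dist_values_def by blast
  show "bdd_below (dist_values x)"
    unfolding dist_values_def bdd_below_def using c0_pos dX_metric(1) x A_subset
    by (intro exI[of _ 0]) (auto simp: less_imp_le)
qed

lemma trunc_dist_le: "x \<in> X \<Longrightarrow> trunc_dist x \<le> c0 \<and> (\<forall>a\<in>A. trunc_dist x \<le> dX x a)"
  using trunc_dist_is_glb unfolding is_glb_def dist_values_def by blast

lemma trunc_dist_greatest: "x \<in> X \<Longrightarrow> s \<le> c0 \<Longrightarrow> (\<And>a. a \<in> A \<Longrightarrow> s \<le> dX x a) \<Longrightarrow> s \<le> trunc_dist x"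
  using trunc_dist_is_glb unfolding is_glb_def dist_values_def by blast

lemma trunc_dist_nonneg: "x \<in> X \<Longrightarrow> 0 \<le> trunc_dist x"
  using trunc_dist_greatest c0_pos dX_metric(1) A_subset by (meson less_imp_le subsetD)

lemma trunc_dist_eq_0_iff: assumes x: "x \<in> X" shows "trunc_dist x = 0 \<longleftrightarrow> x \<in> A"
proof
  assume "x \<in> A"
  then have "trunc_dist x \<le> 0" using trunc_dist_le[OF x] dX_metric(1)[OF x x] by force
  then show "trunc_dist x = 0" using trunc_dist_nonneg[OF x] by simp
next
  assume zero: "trunc_dist x = 0"
  show "x \<in> A"
  proof (rule ccontr)
    assume "x \<notin> A"
    then obtain r where r: "0 < r" "\<forall>y\<in>X. dX x y < r \<longrightarrow> y \<notin> A"
      using A_closed x unfolding closed_in_metric_def by blast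
    have "min r c0 \<le> trunc_dist x"
      using r A_subset by (intro trunc_dist_greatest[OF x]) (auto simp: min_le_iff_disj not_less)
    then show False using zero r(1) c0_pos by (metis leD min_le_iff_disj)
  qed
qed

lemma trunc_dist_lipschitz:
  assumes x: "x \<in> X" and z: "z \<in> X"
  shows "- dX x z + trunc_dist x \<le> trunc_dist z"
proof (rule trunc_dist_greatest[OF z])
  have "- dX x z + trunc_dist x \<le> 0 + trunc_dist x"
    using dX_metric(1)[OF x z] by (intro add_right_weak neg_nonpos) blast
  also have "\<dots> \<le> c0" using trunc_dist_le[OF x] by simp
  finally show "- dX x z + trunc_dist x \<le> c0" .
  fix a assume a: "a \<in> A"
  have "trunc_dist x \<le> dX x z + dX z a"
    using trunc_dist_le[OF x] dX_metric(2)[OF x z] a A_subset by (blast intro: order.trans)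
  then have "- dX x z + trunc_dist x \<le> - dX x z + (dX x z + dX z a)" by (rule add_left_weak)
  then show "- dX x z + trunc_dist x \<le> dX z a" by (simp add: add.assoc[symmetric])
qed

lemma trunc_dist_lsc: "lsc_on X dX trunc_dist"
  unfolding lsc_on_def
proof (intro ballI allI impI)
  fix x a assume x: "x \<in> X" and a: "a < trunc_dist x"
  have "a < trunc_dist y" if y: "y \<in> X" "dX x y < trunc_dist x - a" for y
    using less_neg_add_of_less_diff[OF y(2)] trunc_dist_lipschitz[OF x y(1)] by (rule less_le_trans)
  then show "\<exists>\<delta>>0. \<forall>y\<in>X. dX x y < \<delta> \<longrightarrow> a < trunc_dist y" using diff_pos[OF a] by blast
qed

lemma trunc_dist_usc: "usc_on X dX trunc_dist"
  unfolding usc_on_def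
proof (intro ballI allI impI)
  fix x b assume x: "x \<in> X" and b: "trunc_dist x < b"
  have "trunc_dist y < b" if y: "y \<in> X" "dX x y < b - trunc_dist x" for y
  proof -
    have "trunc_dist y = dX y x + (- dX y x + trunc_dist y)" by (simp add: add.assoc[symmetric])
    also have "\<dots> \<le> dX y x + trunc_dist x" by (rule add_left_weak[OF trunc_dist_lipschitz[OF y(1) x]])
    also have "\<dots> < b - trunc_dist x + trunc_dist x"
      using add_right_strict[OF y(2), of "trunc_dist x"] dX_metric(1)[OF x y(1)] by simp
    finally show ?thesis by simp
  qed
  then show "\<exists>\<delta>>0. \<forall>y\<in>X. dX x y < \<delta> \<longrightarrow> trunc_dist y < b" using diff_pos[OF b] by blast
qed

lemma trunc_dist_graph: "{x @ [trunc_dist x] | x. x \<in> X} \<in> D (Suc n)"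
proof (rule definable_graph_glb[OF definable_dist_values X_definable])
  fix x assume x: "x \<in> X"
  have "{s. x @ [s] \<in> {x @ [s] | x s. length x = n \<and> (x \<in> X \<and> s \<in> dist_values x)}} = dist_values x"
    using x length_definable[OF X_definable] by auto
  then show "is_glb {s. x @ [s] \<in> {x @ [s] | x s. length x = n \<and> (x \<in> X \<and> s \<in> dist_values x)}} (trunc_dist x)"
    using trunc_dist_is_glb[OF x] by simp
qed

lemma orbit_graph: "{g @ x @ [trunc_dist (act g x)] | g x. g \<in> G \<and> x \<in> X} \<in> D (m + n + 1)"
proof (rule definable_graph2I[OF _ length_definable[OF G_definable] length_definable[OF X_definable]])
  define \<Gamma> where "\<Gamma> = {g @ x @ act g x | g x. g \<in> G \<and> x \<in> X}"
  define T where "T = {x @ [trunc_dist x] | x. x \<in> X}"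
  have \<Gamma>_iff: "g @ x @ y \<in> \<Gamma> \<longleftrightarrow> g \<in> G \<and> x \<in> X \<and> y = act g x" if "length g = m" "length x = n" for g x y
    unfolding \<Gamma>_def
    using mem_graph_iff[OF length_definable[OF G_definable] length_definable[OF X_definable] that] .
  have T_iff: "y @ [s] \<in> T \<longleftrightarrow> y \<in> X \<and> s = trunc_dist y" for y s
    unfolding T_def by auto
  let ?p = "Conj (Atom G (block 0 m)) (Conj (Atom X (block m n))
    (Exs n (Conj (Atom \<Gamma> (block 0 m @ block m n @ block (Suc (m + n)) n)) (Atom T (block (Suc (m + n)) n @ [m + n])))))"
  show "definable_pred D (m + n + 1) (holds ?p)"
    using G_definable X_definable action_graph trunc_dist_graph unfolding \<Gamma>_def T_def
    by (intro definable_holds) (auto simp: add.assoc)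
  show "holds ?p (g @ x @ [s]) \<longleftrightarrow> g \<in> G \<and> x \<in> X \<and> s = trunc_dist (act g x)"
    if "length g = m" "length x = n" for g x s
    using that act_closed length_definable[OF X_definable]
    by (simp add: nth_append \<Gamma>_iff T_iff cong: conj_cong) blast
qed

definition orbit_sup :: "'m list \<Rightarrow> 'm" where
  "orbit_sup x = lub ((\<lambda>g. trunc_dist (act g x)) ` G)"

lemma orbit_values_bdd: "x \<in> X \<Longrightarrow> bdd_above ((\<lambda>g. trunc_dist (act g x)) ` G)"
  using trunc_dist_le act_closed unfolding bdd_above_def by blast

lemma orbit_sup_is_lub: "x \<in> X \<Longrightarrow> is_lub ((\<lambda>g. trunc_dist (act g x)) ` G) (orbit_sup x)"
  unfolding orbit_sup_def using e_in_G
  by (intro definable_is_lub_image[OF G_definable _ X_definable orbit_graph orbit_values_bdd]) auto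

lemma orbit_sup_definable_continuous: "def_function_to_M D n X orbit_sup" "cont_to_M X dX orbit_sup"
proof -
  have lsc: "lsc_on X dX (\<lambda>x. trunc_dist (act g x))" if "g \<in> G" for g
    using that act_closed by (intro lsc_on_comp[OF trunc_dist_lsc mcont2_fix_left[OF act_cont that dG_self]]) auto
  have usc: "usc2_on G dG X dX (\<lambda>g x. trunc_dist (act g x))"
    using usc2_on_comp[OF trunc_dist_usc act_cont] act_closed by blast
  have "G \<noteq> {}" using e_in_G by blast
  note lub_over_compact_definable_continuous[OF G_space G_compact this X_space orbit_graph orbit_values_bdd lsc usc]
  then show "def_function_to_M D n X orbit_sup" "cont_to_M X dX orbit_sup"
    unfolding orbit_sup_def[abs_def] by simp_all
qed

lemma orbit_sup_invariant: assumes g: "g \<in> G" and x: "x \<in> X" shows "orbit_sup (act g x) = orbit_sup x"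
proof -
  have "(\<lambda>h. trunc_dist (act h (act g x))) ` G = (\<lambda>h. trunc_dist (act h x)) ` G"
  proof (intro set_eqI iffI)
    fix t assume "t \<in> (\<lambda>h. trunc_dist (act h (act g x))) ` G"
    then obtain h where h: "h \<in> G" "t = trunc_dist (act h (act g x))" by blast
    then have "t = trunc_dist (act (mul h g) x)" using act_mul[OF h(1) g x] by simp
    then show "t \<in> (\<lambda>h. trunc_dist (act h x)) ` G" using mul_closed[OF h(1) g] by blast
  next
    fix t assume "t \<in> (\<lambda>h. trunc_dist (act h x)) ` G"
    then obtain h where h: "h \<in> G" "t = trunc_dist (act h x)" by blast
    then have "t = trunc_dist (act (mul h (ginv g)) (act g x))" using act_invertible[OF h(1) g x] by simp
    then show "t \<in> (\<lambda>h. trunc_dist (act h (act g x))) ` G" using mul_closed[OF h(1) ginv_closed[OF g]] by blast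
  qed
  then show ?thesis unfolding orbit_sup_def by simp
qed

lemma orbit_sup_eq_0_iff: assumes x: "x \<in> X" shows "orbit_sup x = 0 \<longleftrightarrow> x \<in> A"
proof
  assume "orbit_sup x = 0"
  moreover have "trunc_dist x \<le> orbit_sup x"
    using orbit_sup_is_lub[OF x] e_in_G act_e[OF x] unfolding is_lub_def by force
  ultimately show "x \<in> A" using trunc_dist_nonneg[OF x] trunc_dist_eq_0_iff[OF x] by simp
next
  assume "x \<in> A"
  then have "trunc_dist (act g x) = 0" if "g \<in> G" for g
    using that A_invariant A_subset trunc_dist_eq_0_iff act_closed by blast
  then show "orbit_sup x = 0"
    unfolding orbit_sup_def using e_in_G by (intro lub_eq) (auto simp: is_lub_def)
qed

end

theorem corollary5p11:
  fixes D :: "nat \<Rightarrow> ('m::{linorder,group_add}) list set set"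
    and m n :: nat
    and G :: "'m list set" and dG :: "'m list \<Rightarrow> 'm list \<Rightarrow> 'm"
    and mul :: "'m list \<Rightarrow> 'm list \<Rightarrow> 'm list" and ginv :: "'m list \<Rightarrow> 'm list" and e :: "'m list"
    and X :: "'m list set" and dX :: "'m list \<Rightarrow> 'm list \<Rightarrow> 'm"
    and act :: "'m list \<Rightarrow> 'm list \<Rightarrow> 'm list"
    and A :: "'m list set"
  assumes ordered_group: "\<forall>x y z::'m. x < y \<longrightarrow> z + x < z + y \<and> x + z < y + z"
    and dense: "\<forall>x y::'m. x < y \<longrightarrow> (\<exists>z. x < z \<and> z < y)"
    and no_endpoints: "\<forall>x::'m. \<exists>y z. y < x \<and> x < z"
    and D_structure: "is_structure D"
    and expansion: "expands_ordered_group D"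
    and loc_omin: "locally_o_minimal D"
    and def_complete: "definably_complete D"
    and G_group: "def_metric_group D m G dG mul ginv e"
    and G_compact: "definably_compact D m G dG"
    and X_space: "def_metric_space D n X dX"
    and action: "def_action D m G dG mul e n X dX act"
    and A_def: "A \<in> D n"
    and A_closed: "closed_in_metric X dX A"
    and A_inv: "\<forall>g\<in>G. \<forall>x\<in>A. act g x \<in> A"
  shows "\<exists>f :: 'm list \<Rightarrow> 'm.
           def_function_to_M D n X f \<and> cont_to_M X dX f \<and>
           (\<forall>g\<in>G. \<forall>x\<in>X. f (act g x) = f x) \<and>
           {x\<in>X. f x = 0} = A"
proof -
  interpret invariant_closed_subset D m n G dG mul ginv e X dX act A
    using ordered_group dense no_endpoints D_structure expansion def_complete G_group G_compact
      X_space action A_def A_closed A_inv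
    by unfold_locales
  show ?thesis
    using orbit_sup_definable_continuous orbit_sup_invariant orbit_sup_eq_0_iff A_subset
    by (intro exI[of _ orbit_sup]) auto
qed

end
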